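(* Consider a restless bandit and a set system $(N^{\{0,1\}},\mathcal F)$ as in the context, and suppose the bandit is PCL-indexable relative to the activity measure $b^u$ and $\mathcal F$-policies, with index vector $(\nu_j)_{j\in N^{\{0,1\}}}$ produced by the adaptive-greedy algorithm on input $\widehat{\mathbf h}^0_{N^{\{0,1\}}}$. Then the $\nu$-charge problem is indexable relative to $\mathcal F$-policies, and the dynamic allocation index of each controllable state $j\in N^{\{0,1\}}$ is $\nu_j$; that is, for every $\nu\in\mathbb R$, $S(\nu)=\{j\in N^{\{0,1\}}:\nu\le\nu_j\}\in\mathcal F$.
   Context: Restless bandit: finite state space $N=N^{\{0,1\}}\cup N^{\{1\}}$ (disjoint; controllable and uncontrollable states); actions $a\in\{0,1\}$ (passive/active); one-period costs $h^a_i$, transition probabilities $p^a_{ij}$ with $p^1_{ij}=p^0_{ij}$ for $i\in N^{\{1\}}$; discount factor $\beta\in(0,1)$; activity weights $\theta^1_j>0$. Stationary policies $u:N\to[0,1]$ ($u(i)$ = probability of the active action) with $u(i)=1$ on $N^{\{1\}}$. With $X(t)$ the state and $a(t)$ the action at period $t$: $v^u_i=E^u_i[\sum_{t\ge0}h^{a(t)}_{X(t)}\beta^t]$, $b^u_i=E^u_i[\sum_{t\ge0}\theta^1_{X(t)}a(t)\beta^t]$. For $S\subseteq N^{\{0,1\}}$ the $S$-active policy is active on $S\cup N^{\{1\}}$ and passive elsewhere; $v^S_i,b^S_i$ its measures. The $\nu$-charge problem: $v_i(\nu)=\min_u\{v^u_i+\nu b^u_i\}$; $S(\nu)$ denotes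 the set of $j\in N^{\{0,1\}}$ where the active action attains the minimum in the dynamic programming equation $v_j(\nu)=\min_{a}\{h^a_j+\nu\theta^1_j a+\beta\sum_k p^a_{jk}v_k(\nu)\}$. Marginal workloads: $w^S_i=\theta^1_i 1\{i\in N^{\{0,1\}}\}+\beta\sum_{j}(p^1_{ij}-p^0_{ij})b^S_j$. Normalized passive-cost vector: $\widehat{\mathbf h}^0=\mathbf h^0-(\mathbf I-\beta\mathbf P^0)(\mathbf I-\beta\mathbf P^1)^{-1}\mathbf h^1$. Set system: $\mathcal F\subseteq 2^{N^{\{0,1\}}}$ with $\emptyset\in\mathcal F$; every nonempty $S\in\mathcal F$ has nonempty inner boundary $\partial^-S=\{j\in S:S\setminus\{j\}\in\mathcal F\}$; every $S\in\mathcal F$, $S\ne N^{\{0,1\}}$, has some $j\notin S$ with $S\cup\{j\}\in\mathcal F$. An $\mathcal F$-policy is an $S$-active policy with $S\in\mathcal F$. Indexability relative to $\mathcal F$-policies: as $\nu$ increases from $-\infty$ to $+\infty$, $S(\nu)$ decreases monotonically from $N^{\{0,1\}}$ to $\emptyset$, with $S(\nu)\in\mathcal F$ for all $\nu$; the dynamic allocation index of $j$ is the critical charge $\nu_j$ with $S(\nu)=\{j:\nu\le\nu_j\}$. Adaptive-greedy algorithm on input $\mathbf c=(c_j)_{j\in N^{\{0,1\}}}$, with $n=|N^{\{0,1\}}|$: set $S_1=N^{\{0,1\}}$, $y^{S_1}=\min\{c_j/w^{S_1}_j: j\in\partial^-S_1\}$, $\pi_1$ a minimizer, $\nu_{\pi_1}=y^{S_1}$;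 for $k=2,\dots,n$: $S_k=S_{k-1}\setminus\{\pi_{k-1}\}$, $y^{S_k}=\min\{(c_j-\sum_{l=1}^{k-1}y^{S_l}w^{S_l}_j)/w^{S_k}_j: j\in\partial^-S_k\}$, $\pi_k$ a minimizer, $\nu_{\pi_k}=\nu_{\pi_{k-1}}+y^{S_k}$. PCL-indexability: (i) $w^S_j>0$ for all $S\in\mathcal F$, $j\in N^{\{0,1\}}$; (ii) the algorithm on input $\widehat{\mathbf h}^0_{N^{\{0,1\}}}=(\widehat h^0_j)_{j\in N^{\{0,1\}}}$ yields $\nu_{\pi_1}\le\cdots\le\nu_{\pi_n}$. *)

theory Defs
  imports Complex_Main
begin

fun mpow :: "('s::finite \<Rightarrow> 's \<Rightarrow> real) \<Rightarrow> nat \<Rightarrow> 's \<Rightarrow> 's \<Rightarrow> real" where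
  "mpow P 0 = (\<lambda>i j. if i = j then 1 else 0)"
| "mpow P (Suc t) = (\<lambda>i j. \<Sum>k\<in>UNIV. mpow P t i k * P k j)"

text \<open>Expected total discounted reward E_i[sum_t r(X(t)) beta^t] for the Markov chain
  with transition matrix P started at i (written out via the t-step probabilities).\<close>

definition disc_total :: "real \<Rightarrow> ('s::finite \<Rightarrow> 's \<Rightarrow> real) \<Rightarrow> ('s \<Rightarrow> real) \<Rightarrow> 's \<Rightarrow> real" where
  "disc_total \<beta> P r i = (\<Sum>t. \<beta> ^ t * (\<Sum>j\<in>UNIV. mpow P t i j * r j))"

text \<open>A stationary policy u gives the probability u(i) of the active action in state i.\<close>

definition admissible :: "'s set \<Rightarrow> ('s \<Rightarrow> real) \<Rightarrow> bool" where
  "admissible N1 u \<longleftrightarrow> (\<forall>i. 0 \<le> u i \<and> u i \<le> 1) \<and> (\<forall>i\<in>N1. u i = 1)"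

definition pol_P :: "('s \<Rightarrow> 's \<Rightarrow> real) \<Rightarrow> ('s \<Rightarrow> 's \<Rightarrow> real) \<Rightarrow> ('s \<Rightarrow> real) \<Rightarrow> 's \<Rightarrow> 's \<Rightarrow> real" where
  "pol_P P0 P1 u i j = u i * P1 i j + (1 - u i) * P0 i j"

text \<open>v^u: expected total discounted cost; b^u: expected total discounted activity.\<close>

definition cost_meas :: "real \<Rightarrow> ('s::finite \<Rightarrow> 's \<Rightarrow> real) \<Rightarrow> ('s \<Rightarrow> 's \<Rightarrow> real) \<Rightarrow>
    ('s \<Rightarrow> real) \<Rightarrow> ('s \<Rightarrow> real) \<Rightarrow> ('s \<Rightarrow> real) \<Rightarrow> 's \<Rightarrow> real" where
  "cost_meas \<beta> P0 P1 h0 h1 u = disc_total \<beta> (pol_P P0 P1 u) (\<lambda>i. u i * h1 i + (1 - u i) * h0 i)"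

definition work_meas :: "real \<Rightarrow> ('s::finite \<Rightarrow> 's \<Rightarrow> real) \<Rightarrow> ('s \<Rightarrow> 's \<Rightarrow> real) \<Rightarrow>
    ('s \<Rightarrow> real) \<Rightarrow> ('s \<Rightarrow> real) \<Rightarrow> 's \<Rightarrow> real" where
  "work_meas \<beta> P0 P1 \<theta> u = disc_total \<beta> (pol_P P0 P1 u) (\<lambda>i. \<theta> i * u i)"

definition S_active :: "'s set \<Rightarrow> 's set \<Rightarrow> 's \<Rightarrow> real" where
  "S_active N1 S = (\<lambda>i. if i \<in> S \<union> N1 then 1 else 0)"

definition vopt :: "'s set \<Rightarrow> real \<Rightarrow> ('s::finite \<Rightarrow> 's \<Rightarrow> real) \<Rightarrow> ('s \<Rightarrow> 's \<Rightarrow> real) \<Rightarrow>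
    ('s \<Rightarrow> real) \<Rightarrow> ('s \<Rightarrow> real) \<Rightarrow> ('s \<Rightarrow> real) \<Rightarrow> real \<Rightarrow> 's \<Rightarrow> real" where
  "vopt N1 \<beta> P0 P1 h0 h1 \<theta> \<nu> i =
     (INF u \<in> {u. admissible N1 u}. cost_meas \<beta> P0 P1 h0 h1 u i + \<nu> * work_meas \<beta> P0 P1 \<theta> u i)"

text \<open>S(nu): controllable states where the active action attains the minimum in the
  dynamic programming equation.\<close>

definition S_charge :: "'s set \<Rightarrow> 's set \<Rightarrow> real \<Rightarrow> ('s::finite \<Rightarrow> 's \<Rightarrow> real) \<Rightarrow> ('s \<Rightarrow> 's \<Rightarrow> real) \<Rightarrow>
    ('s \<Rightarrow> real) \<Rightarrow> ('s \<Rightarrow> real) \<Rightarrow> ('s \<Rightarrow> real) \<Rightarrow> real \<Rightarrow> 's set" where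
  "S_charge N01 N1 \<beta> P0 P1 h0 h1 \<theta> \<nu> =
     (let v = vopt N1 \<beta> P0 P1 h0 h1 \<theta> \<nu> in
      {j \<in> N01. h1 j + \<nu> * \<theta> j + \<beta> * (\<Sum>k\<in>UNIV. P1 j k * v k)
                \<le> h0 j + \<beta> * (\<Sum>k\<in>UNIV. P0 j k * v k)})"

definition marg_work :: "'s set \<Rightarrow> 's set \<Rightarrow> real \<Rightarrow> ('s::finite \<Rightarrow> 's \<Rightarrow> real) \<Rightarrow> ('s \<Rightarrow> 's \<Rightarrow> real) \<Rightarrow>
    ('s \<Rightarrow> real) \<Rightarrow> 's set \<Rightarrow> 's \<Rightarrow> real" where
  "marg_work N01 N1 \<beta> P0 P1 \<theta> S i =
     \<theta> i * (if i \<in> N01 then 1 else 0)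
     + \<beta> * (\<Sum>j\<in>UNIV. (P1 i j - P0 i j) * work_meas \<beta> P0 P1 \<theta> (S_active N1 S) j)"

definition resolvent :: "real \<Rightarrow> ('s::finite \<Rightarrow> 's \<Rightarrow> real) \<Rightarrow> ('s \<Rightarrow> real) \<Rightarrow> 's \<Rightarrow> real" where
  "resolvent \<beta> P r = (THE x. \<forall>i. x i - \<beta> * (\<Sum>j\<in>UNIV. P i j * x j) = r i)"

definition hhat0 :: "real \<Rightarrow> ('s::finite \<Rightarrow> 's \<Rightarrow> real) \<Rightarrow> ('s \<Rightarrow> 's \<Rightarrow> real) \<Rightarrow>
    ('s \<Rightarrow> real) \<Rightarrow> ('s \<Rightarrow> real) \<Rightarrow> 's \<Rightarrow> real" where
  "hhat0 \<beta> P0 P1 h0 h1 i =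
     (let x = resolvent \<beta> P1 h1 in h0 i - (x i - \<beta> * (\<Sum>j\<in>UNIV. P0 i j * x j)))"

definition inner_boundary :: "'s set set \<Rightarrow> 's set \<Rightarrow> 's set" where
  "inner_boundary F S = {j \<in> S. S - {j} \<in> F}"

definition set_system :: "'s set \<Rightarrow> 's set set \<Rightarrow> bool" where
  "set_system N01 F \<longleftrightarrow> F \<subseteq> Pow N01 \<and> {} \<in> F
     \<and> (\<forall>S\<in>F. S \<noteq> {} \<longrightarrow> inner_boundary F S \<noteq> {})
     \<and> (\<forall>S\<in>F. S \<noteq> N01 \<longrightarrow> (\<exists>j\<in>N01 - S. insert j S \<in> F))"

text \<open>A run of the adaptive-greedy algorithm on input c, with n = card N01:
  pi k is the state chosen at step k (k = 1..n), y k the value y^{S_k},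
  S_k = N01 - {pi 1, ..., pi (k-1)}.\<close>

definition ag_set :: "'s set \<Rightarrow> (nat \<Rightarrow> 's) \<Rightarrow> nat \<Rightarrow> 's set" where
  "ag_set N01 \<pi> k = N01 - \<pi> ` {1..<k}"

definition adaptive_greedy_run :: "'s set \<Rightarrow> 's set set \<Rightarrow> ('s set \<Rightarrow> 's \<Rightarrow> real) \<Rightarrow> ('s \<Rightarrow> real)
    \<Rightarrow> (nat \<Rightarrow> 's) \<Rightarrow> (nat \<Rightarrow> real) \<Rightarrow> bool" where
  "adaptive_greedy_run N01 F w c \<pi> y \<longleftrightarrow>
     (\<forall>k\<in>{1..card N01}.
        let S = ag_set N01 \<pi> k;
            r = (\<lambda>j. (c j - (\<Sum>l\<in>{1..<k}. y l * w (ag_set N01 \<pi> l) j)) / w S j)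
        in \<pi> k \<in> inner_boundary F S \<and> y k = r (\<pi> k)
           \<and> (\<forall>j\<in>inner_boundary F S. y k \<le> r j))"

text \<open>Index computed by the algorithm: nu_{pi k} = y^{S_1} + ... + y^{S_k}.\<close>

definition ag_index :: "(nat \<Rightarrow> real) \<Rightarrow> nat \<Rightarrow> real" where
  "ag_index y k = (\<Sum>l\<in>{1..k}. y l)"

end

theory Submission
  imports Defs
begin

text \<open>For a set S of controllable states let V_S(\<nu>) be the value of the S-active policy under
  charge \<nu>, and let g_S(\<nu>, j) be the difference between the active and the passive one-step
  lookahead costs at j. It is affine in \<nu> with slope the marginal workload w^S_j, which PCL(i)
  makes positive. Along the adaptive-greedy run S_1 = N^{0,1}, S_{k+1} = S_k - {\<pi>_k}, the gap of
  the pivot \<pi>_k vanishes at \<nu> = \<nu>_{\<pi>_k}, so removing \<pi>_k does not change the value function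
  at that charge. By induction g_{S_k}(\<nu>, j) = (\<nu> - \<nu>_{\<pi>_{k-1}}) w^{S_k}_j - r_k(j), with r_k the
  numerators of the algorithm, and PCL(ii) fixes the signs of r_k at the pivots. Hence for
  \<nu>_{\<pi>_{k-1}} < \<nu> \<le> \<nu>_{\<pi>_k} the gap of S_k is nonpositive exactly on S_k, the S_k-active policy
  satisfies the optimality equations, and a maximum principle for discounted stochastic matrices
  shows that it is optimal, so S(\<nu>) = S_k.\<close>

section \<open>Discounted Markov chains\<close>

definition stochastic :: "('s::finite \<Rightarrow> 's \<Rightarrow> real) \<Rightarrow> bool" where
  "stochastic P \<longleftrightarrow> (\<forall>i j. 0 \<le> P i j) \<and> (\<forall>i. (\<Sum>j\<in>UNIV. P i j) = 1)"

lemma discounted_superharmonic_nonneg: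
  fixes Q :: "'s::finite \<Rightarrow> 's \<Rightarrow> real"
  assumes Q: "stochastic Q" and "0 \<le> \<beta>" "\<beta> < 1"
    and super: "\<forall>i. \<beta> * (\<Sum>j\<in>UNIV. Q i j * D j) \<le> D i"
  shows "0 \<le> D i"
proof -
  define m where "m = Min (range D)"
  have m_le: "m \<le> D j" for j unfolding m_def by simp
  have "m \<in> range D" unfolding m_def by (intro Min_in) auto
  then obtain i0 where i0: "D i0 = m" by auto
  have "m = (\<Sum>j\<in>UNIV. Q i0 j * m)"
    using Q by (simp add: stochastic_def sum_distrib_right[symmetric])
  also have "\<dots> \<le> (\<Sum>j\<in>UNIV. Q i0 j * D j)"
    using Q by (intro sum_mono mult_left_mono m_le) (auto simp: stochastic_def)
  finally have "\<beta> * m \<le> m"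
    using super[rule_format, of i0] i0 \<open>0 \<le> \<beta>\<close> by (metis mult_left_mono order_trans)
  then have "0 \<le> (1 - \<beta>) * m" by (simp add: algebra_simps)
  then have "0 \<le> m" using \<open>\<beta> < 1\<close> by (simp add: zero_le_mult_iff)
  then show ?thesis using m_le[of i] by linarith
qed

lemma discounted_fixpoint_unique:
  fixes Q :: "'s::finite \<Rightarrow> 's \<Rightarrow> real"
  assumes Q: "stochastic Q" and \<beta>: "0 \<le> \<beta>" "\<beta> < 1"
    and x: "\<forall>i. x i = r i + \<beta> * (\<Sum>j\<in>UNIV. Q i j * x j)"
    and z: "\<forall>i. z i = r i + \<beta> * (\<Sum>j\<in>UNIV. Q i j * z j)"
  shows "x = z"
proof
  fix i
  have diff: "\<beta> * (\<Sum>j\<in>UNIV. Q k j * (x j - z j)) = x k - z k"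
    and diff': "\<beta> * (\<Sum>j\<in>UNIV. Q k j * (z j - x j)) = z k - x k" for k
    using x[rule_format, of k] z[rule_format, of k]
    by (simp_all add: right_diff_distrib sum_subtractf)
  have "0 \<le> x i - z i"
    by (rule discounted_superharmonic_nonneg[OF Q \<beta>]) (simp add: diff)
  moreover have "0 \<le> z i - x i"
    by (rule discounted_superharmonic_nonneg[OF Q \<beta>]) (simp add: diff')
  ultimately show "x i = z i" by simp
qed

lemma resolvent_eqI:
  fixes P :: "'s::finite \<Rightarrow> 's \<Rightarrow> real"
  assumes "stochastic P" "0 \<le> \<beta>" "\<beta> < 1"
    and x: "\<forall>i. x i = r i + \<beta> * (\<Sum>j\<in>UNIV. P i j * x j)"
  shows "resolvent \<beta> P r = x"
  unfolding resolvent_def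
proof (rule the_equality)
  show "\<forall>i. x i - \<beta> * (\<Sum>j\<in>UNIV. P i j * x j) = r i" using x by (metis add_diff_cancel_right')
next
  fix z assume "\<forall>i. z i - \<beta> * (\<Sum>j\<in>UNIV. P i j * z j) = r i"
  then have "\<forall>i. z i = r i + \<beta> * (\<Sum>j\<in>UNIV. P i j * z j)" by (metis diff_add_cancel)
  then show "z = x" using discounted_fixpoint_unique[OF assms(1-3) _ x] by blast
qed

lemma mpow_Suc_left: "mpow P (Suc t) i j = (\<Sum>k\<in>UNIV. P i k * mpow P t k j)"
proof (induction t arbitrary: j)
  case 0
  then show ?case
    by (simp add: if_distrib[where f="\<lambda>x. x * _"] if_distrib[where f="\<lambda>x. _ * x"] cong: if_cong)
next
  case (Suc t)
  have "mpow P (Suc (Suc t)) i j = (\<Sum>k\<in>UNIV. mpow P (Suc t) i k * P k j)" by simp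
  also have "\<dots> = (\<Sum>k\<in>UNIV. (\<Sum>l\<in>UNIV. P i l * mpow P t l k) * P k j)"
    by (simp only: Suc.IH)
  also have "\<dots> = (\<Sum>l\<in>UNIV. P i l * (\<Sum>k\<in>UNIV. mpow P t l k * P k j))"
    by (simp add: sum_distrib_right sum_distrib_left mult.assoc) (rule sum.swap)
  finally show ?case by simp
qed

lemma stochastic_mpow:
  assumes "stochastic P"
  shows "stochastic (mpow P t)"
proof (induction t)
  case 0
  then show ?case by (simp add: stochastic_def)
next
  case (Suc t)
  have "(\<Sum>j\<in>UNIV. mpow P (Suc t) i j) = (\<Sum>k\<in>UNIV. mpow P t i k * (\<Sum>j\<in>UNIV. P k j))" for i
    by (simp add: sum_distrib_left) (rule sum.swap)
  then show ?case
    using Suc assms by (auto simp: stochastic_def intro!: sum_nonneg)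
qed

lemma abs_mpow_sum_le:
  assumes "stochastic P"
  shows "\<bar>\<Sum>j\<in>UNIV. mpow P t i j * r j\<bar> \<le> (\<Sum>k\<in>UNIV. \<bar>r k\<bar>)"
proof -
  have M: "stochastic (mpow P t)" using stochastic_mpow[OF assms] .
  have "\<bar>\<Sum>j\<in>UNIV. mpow P t i j * r j\<bar> \<le> (\<Sum>j\<in>UNIV. mpow P t i j * \<bar>r j\<bar>)"
    using M by (auto simp: stochastic_def abs_mult intro: order.trans[OF sum_abs])
  also have "\<dots> \<le> (\<Sum>j\<in>UNIV. mpow P t i j * (\<Sum>k\<in>UNIV. \<bar>r k\<bar>))"
    using M by (intro sum_mono mult_left_mono member_le_sum) (auto simp: stochastic_def)
  also have "\<dots> = (\<Sum>k\<in>UNIV. \<bar>r k\<bar>)"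
    using M by (simp add: stochastic_def sum_distrib_right[symmetric])
  finally show ?thesis .
qed

lemma disc_total_fixpoint:
  fixes P :: "'s::finite \<Rightarrow> 's \<Rightarrow> real"
  assumes P: "stochastic P" and \<beta>: "0 \<le> \<beta>" "\<beta> < 1"
  shows "disc_total \<beta> P r i = r i + \<beta> * (\<Sum>j\<in>UNIV. P i j * disc_total \<beta> P r j)"
proof -
  define a where "a t i = \<beta> ^ t * (\<Sum>j\<in>UNIV. mpow P t i j * r j)" for t i
  have summable: "summable (\<lambda>t. a t i)" for i
  proof (rule summable_comparison_test)
    show "\<exists>N. \<forall>t\<ge>N. norm (a t i) \<le> (\<Sum>k\<in>UNIV. \<bar>r k\<bar>) * \<beta> ^ t"
      using abs_mpow_sum_le[OF P] \<beta> unfolding a_def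
      by (auto simp: abs_mult mult.commute intro!: mult_left_mono)
    show "summable (\<lambda>t. (\<Sum>k\<in>UNIV. \<bar>r k\<bar>) * \<beta> ^ t)"
      using \<beta> by (intro summable_mult summable_geometric) auto
  qed
  have a_0: "a 0 i = r i" for i
    by (simp add: a_def if_distrib[where f="\<lambda>x. x * _"] cong: if_cong)
  have a_Suc: "a (Suc t) i = \<beta> * (\<Sum>k\<in>UNIV. P i k * a t k)" for t i
    unfolding a_def mpow_Suc_left power_Suc
    by (simp add: sum_distrib_right sum_distrib_left mult.assoc mult.left_commute) (rule sum.swap)
  have "disc_total \<beta> P r i = (\<Sum>t. a (Suc t) i) + a 0 i"
    unfolding disc_total_def a_def[symmetric] using suminf_split_head[OF summable] by simp
  also have "(\<Sum>t. a (Suc t) i) = \<beta> * (\<Sum>t. \<Sum>k\<in>UNIV. P i k * a t k)"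
    unfolding a_Suc by (rule suminf_mult) (auto intro!: summable_sum summable_mult summable)
  also have "(\<Sum>t. \<Sum>k\<in>UNIV. P i k * a t k) = (\<Sum>k\<in>UNIV. P i k * (\<Sum>t. a t k))"
    by (subst suminf_sum) (auto intro!: summable_mult summable sum.cong suminf_mult)
  also have "(\<lambda>k. \<Sum>t. a t k) = disc_total \<beta> P r" unfolding disc_total_def a_def by auto
  finally show ?thesis using a_0 by simp
qed

section \<open>S-active policies under a charge\<close>

lemma sum_pol_P:
  "(\<Sum>j\<in>UNIV. pol_P P0 P1 u i j * v j)
     = u i * (\<Sum>j\<in>UNIV. P1 i j * v j) + (1 - u i) * (\<Sum>j\<in>UNIV. P0 i j * v j)"
  unfolding pol_P_def by (simp add: distrib_right sum.distrib mult.assoc sum_distrib_left)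

locale restless_bandit =
  fixes N01 N1 :: "'s::finite set" and \<beta> :: real and P0 P1 :: "'s \<Rightarrow> 's \<Rightarrow> real"
    and h0 h1 \<theta> :: "'s \<Rightarrow> real"
  assumes disjoint: "N01 \<inter> N1 = {}" and covers: "N01 \<union> N1 = UNIV"
    and \<beta>: "0 \<le> \<beta>" "\<beta> < 1"
    and P0: "stochastic P0" and P1: "stochastic P1"
begin

definition act_cost :: "real \<Rightarrow> ('s \<Rightarrow> real) \<Rightarrow> 's \<Rightarrow> real" where
  "act_cost \<nu> v j = h1 j + \<nu> * \<theta> j + \<beta> * (\<Sum>k\<in>UNIV. P1 j k * v k)"

definition pas_cost :: "('s \<Rightarrow> real) \<Rightarrow> 's \<Rightarrow> real" where
  "pas_cost v j = h0 j + \<beta> * (\<Sum>k\<in>UNIV. P0 j k * v k)"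

definition policy_op :: "('s \<Rightarrow> real) \<Rightarrow> real \<Rightarrow> ('s \<Rightarrow> real) \<Rightarrow> 's \<Rightarrow> real" where
  "policy_op u \<nu> v j = u j * act_cost \<nu> v j + (1 - u j) * pas_cost v j"

definition charged_value :: "('s \<Rightarrow> real) \<Rightarrow> real \<Rightarrow> 's \<Rightarrow> real" where
  "charged_value u \<nu> i = cost_meas \<beta> P0 P1 h0 h1 u i + \<nu> * work_meas \<beta> P0 P1 \<theta> u i"

abbreviation S_value :: "'s set \<Rightarrow> real \<Rightarrow> 's \<Rightarrow> real" where
  "S_value S \<equiv> charged_value (S_active N1 S)"

definition cost_gap :: "'s set \<Rightarrow> real \<Rightarrow> 's \<Rightarrow> real" where
  "cost_gap S \<nu> j = act_cost \<nu> (S_value S \<nu>) j - pas_cost (S_value S \<nu>) j"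

lemma stochastic_pol_P:
  assumes "\<forall>i. 0 \<le> u i \<and> u i \<le> 1"
  shows "stochastic (pol_P P0 P1 u)"
  using assms P0 P1 unfolding stochastic_def pol_P_def
  by (auto simp: sum.distrib sum_distrib_left[symmetric])

lemma policy_op_eq:
  "policy_op u \<nu> v i = u i * (h1 i + \<nu> * \<theta> i) + (1 - u i) * h0 i
     + \<beta> * (\<Sum>j\<in>UNIV. pol_P P0 P1 u i j * v j)"
  unfolding policy_op_def act_cost_def pas_cost_def sum_pol_P by (simp add: algebra_simps)

lemma charged_value_fixpoint:
  assumes u: "\<forall>i. 0 \<le> u i \<and> u i \<le> 1"
  shows "policy_op u \<nu> (charged_value u \<nu>) = charged_value u \<nu>"
proof
  fix i
  define Q where "Q = pol_P P0 P1 u"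
  define c where "c = cost_meas \<beta> P0 P1 h0 h1 u"
  define w where "w = work_meas \<beta> P0 P1 \<theta> u"
  have c: "c i = u i * h1 i + (1 - u i) * h0 i + \<beta> * (\<Sum>j\<in>UNIV. Q i j * c j)"
    unfolding c_def cost_meas_def Q_def by (rule disc_total_fixpoint[OF stochastic_pol_P[OF u] \<beta>])
  have w: "w i = \<theta> i * u i + \<beta> * (\<Sum>j\<in>UNIV. Q i j * w j)"
    unfolding w_def work_meas_def Q_def by (rule disc_total_fixpoint[OF stochastic_pol_P[OF u] \<beta>])
  have "(\<Sum>j\<in>UNIV. Q i j * (c j + \<nu> * w j))
      = (\<Sum>j\<in>UNIV. Q i j * c j) + \<nu> * (\<Sum>j\<in>UNIV. Q i j * w j)"
    by (simp add: distrib_left sum.distrib sum_distrib_left mult.left_commute)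
  then show "policy_op u \<nu> (charged_value u \<nu>) i = charged_value u \<nu> i"
    unfolding policy_op_eq charged_value_def c_def[symmetric] w_def[symmetric] Q_def[symmetric]
    using c w by (simp add: algebra_simps)
qed

lemma charged_value_unique:
  assumes u: "\<forall>i. 0 \<le> u i \<and> u i \<le> 1" and v: "policy_op u \<nu> v = v"
  shows "v = charged_value u \<nu>"
proof (rule discounted_fixpoint_unique[OF stochastic_pol_P[OF u] \<beta>])
  define r where "r i = u i * (h1 i + \<nu> * \<theta> i) + (1 - u i) * h0 i" for i
  have "x = policy_op u \<nu> x \<Longrightarrow> \<forall>i. x i = r i + \<beta> * (\<Sum>j\<in>UNIV. pol_P P0 P1 u i j * x j)" for x
    unfolding r_def by (metis policy_op_eq)
  then show "\<forall>i. v i = r i + \<beta> * (\<Sum>j\<in>UNIV. pol_P P0 P1 u i j * v j)"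
    and "\<forall>i. charged_value u \<nu> i = r i + \<beta> * (\<Sum>j\<in>UNIV. pol_P P0 P1 u i j * charged_value u \<nu> j)"
    using v charged_value_fixpoint[OF u] by simp_all
qed

lemma S_active_range: "\<forall>i. 0 \<le> S_active N1 S i \<and> S_active N1 S i \<le> 1"
  unfolding S_active_def by auto

lemma S_value_eq:
  "S_value S \<nu> i = (if i \<in> S \<union> N1 then act_cost \<nu> (S_value S \<nu>) i else pas_cost (S_value S \<nu>) i)"
  using fun_cong[OF charged_value_fixpoint[OF S_active_range], of S \<nu> i]
  unfolding policy_op_def S_active_def by (cases "i \<in> S \<union> N1") simp_all

lemma cost_gap_affine:
  assumes "j \<in> N01"
  shows "cost_gap S \<nu> j = cost_gap S \<mu> j + (\<nu> - \<mu>) * marg_work N01 N1 \<beta> P0 P1 \<theta> S j"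
  using assms unfolding cost_gap_def act_cost_def pas_cost_def charged_value_def marg_work_def
  by (simp add: algebra_simps sum.distrib sum_distrib_left sum_subtractf)

lemma S_value_le_charged_value:
  assumes opt: "\<forall>j\<in>N01. S_value S \<nu> j \<le> act_cost \<nu> (S_value S \<nu>) j
                        \<and> S_value S \<nu> j \<le> pas_cost (S_value S \<nu>) j"
    and u: "admissible N1 u"
  shows "S_value S \<nu> i \<le> charged_value u \<nu> i"
proof -
  have u_range: "\<forall>i. 0 \<le> u i \<and> u i \<le> 1" using u by (simp add: admissible_def)
  define v where "v = S_value S \<nu>"
  define W where "W = charged_value u \<nu>"
  have v_le: "v k \<le> policy_op u \<nu> v k" for k
  proof (cases "k \<in> N1")
    case True
    then have "u k = 1" using u by (simp add: admissible_def)
    with True show ?thesis using S_value_eq[of S \<nu> k] by (simp add: v_def policy_op_def)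
  next
    case False
    then have "v k \<le> act_cost \<nu> v k" "v k \<le> pas_cost v k" using opt covers by (auto simp: v_def)
    then have "u k * v k + (1 - u k) * v k \<le> policy_op u \<nu> v k"
      unfolding policy_op_def using u_range by (intro add_mono mult_left_mono) auto
    then show ?thesis by (simp add: algebra_simps)
  qed
  have "\<beta> * (\<Sum>j\<in>UNIV. pol_P P0 P1 u k j * (W j - v j)) \<le> W k - v k" for k
  proof -
    have "\<beta> * (\<Sum>j\<in>UNIV. pol_P P0 P1 u k j * (W j - v j)) = policy_op u \<nu> W k - policy_op u \<nu> v k"
      unfolding policy_op_eq by (simp add: right_diff_distrib sum_subtractf)
    also have "\<dots> \<le> W k - v k"
      using v_le[of k] fun_cong[OF charged_value_fixpoint[OF u_range], of \<nu> k] by (simp add: W_def)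
    finally show ?thesis .
  qed
  then have "0 \<le> W i - v i"
    by (intro discounted_superharmonic_nonneg[OF stochastic_pol_P[OF u_range] \<beta>]) auto
  then show ?thesis by (simp add: v_def W_def)
qed

lemma vopt_eq_S_value:
  assumes opt: "\<forall>j\<in>N01. S_value S \<nu> j \<le> act_cost \<nu> (S_value S \<nu>) j
                        \<and> S_value S \<nu> j \<le> pas_cost (S_value S \<nu>) j"
  shows "vopt N1 \<beta> P0 P1 h0 h1 \<theta> \<nu> = S_value S \<nu>"
proof
  fix i
  have S_adm: "admissible N1 (S_active N1 S)" by (auto simp: admissible_def S_active_def)
  have "S_value S \<nu> i = (INF u \<in> {u. admissible N1 u}. charged_value u \<nu> i)"
  proof (rule antisym)
    show "S_value S \<nu> i \<le> (INF u \<in> {u. admissible N1 u}. charged_value u \<nu> i)"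
      using S_adm S_value_le_charged_value[OF opt] by (auto intro: cINF_greatest)
    show "(INF u \<in> {u. admissible N1 u}. charged_value u \<nu> i) \<le> S_value S \<nu> i"
      using S_adm S_value_le_charged_value[OF opt] by (intro cINF_lower bdd_belowI2) auto
  qed
  then show "vopt N1 \<beta> P0 P1 h0 h1 \<theta> \<nu> i = S_value S \<nu> i"
    by (simp add: vopt_def charged_value_def)
qed

lemma S_charge_eq_if_gap_sign:
  assumes "S \<subseteq> N01" and sign: "\<forall>j\<in>N01. j \<in> S \<longleftrightarrow> cost_gap S \<nu> j \<le> 0"
  shows "S_charge N01 N1 \<beta> P0 P1 h0 h1 \<theta> \<nu> = S"
proof -
  have "S_value S \<nu> j \<le> act_cost \<nu> (S_value S \<nu>) j \<and> S_value S \<nu> j \<le> pas_cost (S_value S \<nu>) j"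
    if "j \<in> N01" for j
    using that sign disjoint S_value_eq[of S \<nu> j] by (auto simp: cost_gap_def)
  then have "vopt N1 \<beta> P0 P1 h0 h1 \<theta> \<nu> = S_value S \<nu>" by (intro vopt_eq_S_value) auto
  then show ?thesis
    using assms by (auto simp: S_charge_def Let_def cost_gap_def act_cost_def pas_cost_def)
qed

lemma S_value_remove:
  assumes "i \<in> S" "i \<in> N01" and gap: "cost_gap S \<nu> i = 0"
  shows "S_value (S - {i}) \<nu> = S_value S \<nu>"
proof (rule sym, rule charged_value_unique[OF S_active_range], rule ext)
  fix k
  have "i \<notin> N1" using assms disjoint by auto
  then have "policy_op (S_active N1 (S - {i})) \<nu> x k
      = (if k = i then pas_cost x k else policy_op (S_active N1 S) \<nu> x k)" for x
    by (simp add: policy_op_def S_active_def)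
  moreover have "S_value S \<nu> i = pas_cost (S_value S \<nu>) i"
    using S_value_eq[of S \<nu> i] gap \<open>i \<in> S\<close> by (simp add: cost_gap_def)
  ultimately show "policy_op (S_active N1 (S - {i})) \<nu> (S_value S \<nu>) k = S_value S \<nu> k"
    using charged_value_fixpoint[OF S_active_range] by simp
qed

lemma cost_gap_N01_0:
  assumes "j \<in> N01"
  shows "cost_gap N01 0 j = - hhat0 \<beta> P0 P1 h0 h1 j"
proof -
  have act: "S_value N01 0 i = act_cost 0 (S_value N01 0) i" for i
    using S_value_eq[of N01 0 i] covers by auto
  have "\<forall>i. S_value N01 0 i = h1 i + \<beta> * (\<Sum>j\<in>UNIV. P1 i j * S_value N01 0 j)"
  proof
    fix i
    show "S_value N01 0 i = h1 i + \<beta> * (\<Sum>j\<in>UNIV. P1 i j * S_value N01 0 j)"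
      using act[of i] by (simp add: act_cost_def)
  qed
  then have "resolvent \<beta> P1 h1 = S_value N01 0" by (rule resolvent_eqI[OF P1 \<beta>])
  then show ?thesis
    unfolding hhat0_def Let_def cost_gap_def act_cost_def pas_cost_def
    using act[of j] by (simp add: act_cost_def)
qed

end

section \<open>Runs of the adaptive-greedy algorithm\<close>

lemma set_system_top:
  assumes "set_system N01 (F :: 's::finite set set)"
  shows "N01 \<in> F"
proof (rule ccontr)
  assume "N01 \<notin> F"
  have "{} \<in> F" and grow: "\<forall>S\<in>F. S \<noteq> N01 \<longrightarrow> (\<exists>j\<in>N01 - S. insert j S \<in> F)"
    using assms unfolding set_system_def by auto
  obtain S where S: "S \<in> F" "\<forall>T\<in>F. card T \<le> card S"
    using Max_in[of "card ` F"] Max_ge[of "card ` F"] \<open>{} \<in> F\<close> by fastforce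
  then obtain j where "j \<notin> S" "insert j S \<in> F"
    using grow \<open>N01 \<notin> F\<close> by fastforce
  then show False using S(2) by fastforce
qed

lemma ag_set_Suc: "1 \<le> k \<Longrightarrow> ag_set N01 \<pi> (Suc k) = ag_set N01 \<pi> k - {\<pi> k}"
  by (auto simp: ag_set_def less_Suc_eq)

lemma ag_set_subset: "ag_set N01 \<pi> k \<subseteq> N01"
  by (auto simp: ag_set_def)

lemma inj_on_pivots:
  assumes "\<forall>k\<in>{1..n}. \<pi> k \<in> ag_set N01 \<pi> k"
  shows "inj_on \<pi> {1..n}"
proof (rule inj_onI)
  have "\<pi> a \<noteq> \<pi> b" if "a \<in> {1..n}" "b \<in> {1..n}" "a < b" for a b
  proof -
    have "\<pi> a \<in> \<pi> ` {1..<b}" using that by auto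
    moreover have "\<pi> b \<notin> \<pi> ` {1..<b}" using assms that(2) by (simp add: ag_set_def)
    ultimately show ?thesis by metis
  qed
  then show "a = b" if "a \<in> {1..n}" "b \<in> {1..n}" "\<pi> a = \<pi> b" for a b
    using that by (metis linorder_neqE_nat)
qed

lemma pivot_mem_ag_set_iff:
  assumes inj: "inj_on \<pi> {1..n}" and m: "m \<in> {1..n}" and "k \<le> Suc n" "\<pi> m \<in> N01"
  shows "\<pi> m \<in> ag_set N01 \<pi> k \<longleftrightarrow> k \<le> m"
proof -
  have "\<pi> m \<in> \<pi> ` {1..<k} \<longleftrightarrow> m \<in> {1..<k}"
    using m \<open>k \<le> Suc n\<close> by (intro inj_on_image_mem_iff[OF inj]) auto
  then show ?thesis using assms by (auto simp: ag_set_def)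
qed

lemma exists_threshold:
  fixes f :: "nat \<Rightarrow> real"
  shows "\<exists>k\<in>{1..Suc n}. (k \<le> n \<longrightarrow> \<nu> \<le> f k) \<and> (1 < k \<longrightarrow> f (k - 1) < \<nu>)"
proof (induction n)
  case 0
  show ?case by auto
next
  case (Suc n)
  then obtain k where k: "k \<in> {1..Suc n}" "k \<le> n \<longrightarrow> \<nu> \<le> f k" "1 < k \<longrightarrow> f (k - 1) < \<nu>"
    by blast
  consider "k \<le> n" | "k = Suc n" using k(1) by fastforce
  then show ?case
  proof cases
    case 1
    with k show ?thesis by (intro bexI[of _ k]) auto
  next
    case 2
    show ?thesis
    proof (cases "\<nu> \<le> f (Suc n)")
      case True
      with k 2 show ?thesis by (intro bexI[of _ k]) auto
    next
      case False
      then show ?thesis by (intro bexI[of _ "Suc (Suc n)"]) auto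
    qed
  qed
qed

lemma ag_index_0: "ag_index y 0 = 0"
  by (simp add: ag_index_def)

lemma ag_index_Suc: "ag_index y (Suc k) = ag_index y k + y (Suc k)"
  by (simp add: ag_index_def)

locale pcl_greedy_run = restless_bandit N01 N1 \<beta> P0 P1 h0 h1 \<theta>
  for N01 N1 :: "'s::finite set" and \<beta> P0 P1 h0 h1 \<theta> +
  fixes F :: "'s set set" and \<pi> :: "nat \<Rightarrow> 's" and y :: "nat \<Rightarrow> real"
  assumes set_system: "set_system N01 F"
    and marg_work_pos: "\<forall>S\<in>F. \<forall>j\<in>N01. 0 < marg_work N01 N1 \<beta> P0 P1 \<theta> S j"
    and greedy_run: "adaptive_greedy_run N01 F (marg_work N01 N1 \<beta> P0 P1 \<theta>) (hhat0 \<beta> P0 P1 h0 h1) \<pi> y"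
    and index_mono: "\<forall>k\<in>{1..<card N01}. ag_index y k \<le> ag_index y (Suc k)"
begin

abbreviation w :: "'s set \<Rightarrow> 's \<Rightarrow> real" where
  "w \<equiv> marg_work N01 N1 \<beta> P0 P1 \<theta>"

abbreviation stage :: "nat \<Rightarrow> 's set" where
  "stage \<equiv> ag_set N01 \<pi>"

definition residual :: "nat \<Rightarrow> 's \<Rightarrow> real" where
  "residual k j = hhat0 \<beta> P0 P1 h0 h1 j - (\<Sum>l\<in>{1..<k}. y l * w (stage l) j)"

lemma pivot_in_boundary: "k \<in> {1..card N01} \<Longrightarrow> \<pi> k \<in> inner_boundary F (stage k)"
  using greedy_run by (auto simp: adaptive_greedy_run_def Let_def)

lemma pivot_mem_stage: "k \<in> {1..card N01} \<Longrightarrow> \<pi> k \<in> stage k"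
  using pivot_in_boundary by (auto simp: inner_boundary_def)

lemma pivot_mem_N01: "k \<in> {1..card N01} \<Longrightarrow> \<pi> k \<in> N01"
  using pivot_mem_stage ag_set_subset[of N01 \<pi> k] by blast

lemma inj_on_pivot: "inj_on \<pi> {1..card N01}"
  by (rule inj_on_pivots) (use pivot_mem_stage in blast)

lemma image_pivot: "\<pi> ` {1..card N01} = N01"
proof (rule card_subset_eq)
  show "\<pi> ` {1..card N01} \<subseteq> N01"
    using pivot_mem_N01 by blast
  show "card (\<pi> ` {1..card N01}) = card N01" using card_image[OF inj_on_pivot] by simp
qed simp

lemma stage_in_F: "1 \<le> k \<Longrightarrow> k \<le> Suc (card N01) \<Longrightarrow> stage k \<in> F"
proof (induction k rule: nat_induct_at_least)
  case base
  show ?case using set_system_top[OF set_system] by (simp add: ag_set_def)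
next
  case (Suc k)
  then show ?case
    using pivot_in_boundary[of k] by (simp add: ag_set_Suc inner_boundary_def)
qed

lemma w_stage_pos: "1 \<le> k \<Longrightarrow> k \<le> Suc (card N01) \<Longrightarrow> j \<in> N01 \<Longrightarrow> 0 < w (stage k) j"
  using marg_work_pos stage_in_F[of k] by blast

lemma residual_Suc: "1 \<le> k \<Longrightarrow> residual (Suc k) j = residual k j - y k * w (stage k) j"
  by (simp add: residual_def atLeastLessThanSuc)

lemma residual_pivot:
  assumes k: "k \<in> {1..card N01}"
  shows "residual (Suc k) (\<pi> k) = 0"
proof -
  have "y k = residual k (\<pi> k) / w (stage k) (\<pi> k)"
    using greedy_run k unfolding adaptive_greedy_run_def Let_def residual_def by auto
  moreover have "0 < w (stage k) (\<pi> k)"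
    using k pivot_mem_N01[OF k] by (intro w_stage_pos) auto
  ultimately show ?thesis using k by (simp add: residual_Suc)
qed

lemma y_nonneg:
  assumes "2 \<le> k" "k \<le> card N01"
  shows "0 \<le> y k"
proof -
  obtain j where j: "k = Suc j" "j \<in> {1..<card N01}" using assms by (cases k) auto
  then show ?thesis using index_mono by (auto simp: ag_index_Suc)
qed

lemma ag_index_mono: "a \<le> b \<Longrightarrow> 1 \<le> a \<Longrightarrow> b \<le> card N01 \<Longrightarrow> ag_index y a \<le> ag_index y b"
proof (induction b rule: dec_induct)
  case (step b)
  then show ?case using y_nonneg[of "Suc b"] by (simp add: ag_index_Suc)
qed simp

lemma residual_pivot_nonneg:
  assumes "l \<le> m" "1 \<le> l" "m \<le> card N01"
  shows "0 \<le> residual (Suc l) (\<pi> m)"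
  using assms
proof (induction l rule: inc_induct)
  case base
  then show ?case using residual_pivot[of m] by simp
next
  case (step l)
  have "0 \<le> y (Suc l) * w (stage (Suc l)) (\<pi> m)"
    using step pivot_mem_N01[of m] y_nonneg[of "Suc l"]
    by (intro mult_nonneg_nonneg less_imp_le[OF w_stage_pos]) auto
  then show ?case using step by (simp add: residual_Suc)
qed

lemma residual_pivot_nonpos:
  assumes "Suc m \<le> l" "m \<in> {1..card N01}" "l \<le> Suc (card N01)"
  shows "residual l (\<pi> m) \<le> 0"
  using assms
proof (induction l rule: dec_induct)
  case base
  then show ?case using residual_pivot[of m] by simp
next
  case (step l)
  have "0 \<le> y l * w (stage l) (\<pi> m)"
    using step pivot_mem_N01[of m] y_nonneg[of l]
    by (intro mult_nonneg_nonneg less_imp_le[OF w_stage_pos]) auto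
  then show ?case using step by (simp add: residual_Suc)
qed

text \<open>In the induction step the gap of the pivot vanishes at the charge \<open>ag_index y (Suc k)\<close>, so
  by \<open>S_value_remove\<close> the next stage has the same value function at that charge.\<close>

lemma cost_gap_stage:
  assumes "k \<le> card N01" "j \<in> N01"
  shows "cost_gap (stage (Suc k)) \<nu> j = (\<nu> - ag_index y k) * w (stage (Suc k)) j - residual (Suc k) j"
  using assms
proof (induction k arbitrary: \<nu> j)
  case 0
  then show ?case
    using cost_gap_affine[of j N01 \<nu> 0] cost_gap_N01_0[of j]
    by (simp add: ag_set_def ag_index_0 residual_def)
next
  case (Suc k)
  let ?i = "\<pi> (Suc k)" and ?\<nu> = "ag_index y (Suc k)"
  have k: "Suc k \<in> {1..card N01}" using Suc.prems by simp
  have i: "?i \<in> stage (Suc k)" "?i \<in> N01"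
    using pivot_mem_stage[OF k] pivot_mem_N01[OF k] by auto
  have "cost_gap (stage (Suc k)) ?\<nu> ?i = 0"
    using Suc.IH[of ?i ?\<nu>] Suc.prems i residual_pivot[OF k]
    by (simp add: residual_Suc ag_index_Suc algebra_simps)
  then have same: "S_value (stage (Suc (Suc k))) ?\<nu> = S_value (stage (Suc k)) ?\<nu>"
    using S_value_remove[OF i] by (simp add: ag_set_Suc)
  have "cost_gap (stage (Suc (Suc k))) \<nu> j
      = cost_gap (stage (Suc k)) ?\<nu> j + (\<nu> - ?\<nu>) * w (stage (Suc (Suc k))) j"
    using cost_gap_affine[OF Suc.prems(2), of _ \<nu> ?\<nu>] by (simp add: cost_gap_def same)
  also have "\<dots> = (\<nu> - ?\<nu>) * w (stage (Suc (Suc k))) j - residual (Suc (Suc k)) j"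
    using Suc.IH[of j ?\<nu>] Suc.prems by (simp add: residual_Suc ag_index_Suc algebra_simps)
  finally show ?case .
qed

lemma cost_gap_pivot_nonpos:
  assumes "m \<in> {1..card N01}" "1 \<le> l" "l \<le> m" "\<nu> \<le> ag_index y l"
  shows "cost_gap (stage l) \<nu> (\<pi> m) \<le> 0"
proof -
  obtain k where l: "l = Suc k" using assms by (cases l) auto
  have m: "\<pi> m \<in> N01" using pivot_mem_N01[OF assms(1)] .
  have "cost_gap (stage l) \<nu> (\<pi> m) = (\<nu> - ag_index y l) * w (stage l) (\<pi> m) - residual (Suc l) (\<pi> m)"
    using cost_gap_stage[of k "\<pi> m" \<nu>] assms m l
    by (simp add: residual_Suc ag_index_Suc algebra_simps)
  moreover have "(\<nu> - ag_index y l) * w (stage l) (\<pi> m) \<le> 0"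
    using assms m w_stage_pos[of l "\<pi> m"] by (intro mult_nonpos_nonneg) auto
  ultimately show ?thesis using residual_pivot_nonneg[of l m] assms by simp
qed

lemma cost_gap_pivot_pos:
  assumes "m \<in> {1..card N01}" "m < l" "l \<le> Suc (card N01)" "ag_index y (l - 1) < \<nu>"
  shows "0 < cost_gap (stage l) \<nu> (\<pi> m)"
proof -
  obtain k where l: "l = Suc k" using assms by (cases l) auto
  have m: "\<pi> m \<in> N01" using pivot_mem_N01[OF assms(1)] .
  have "0 < (\<nu> - ag_index y k) * w (stage l) (\<pi> m)"
    using assms m l w_stage_pos[of l "\<pi> m"] by (intro mult_pos_pos) auto
  then show ?thesis
    using cost_gap_stage[of k "\<pi> m" \<nu>] residual_pivot_nonpos[of m l] assms m l by simp
qed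

lemma S_charge_eq_stage:
  "\<exists>k\<in>{1..Suc (card N01)}. S_charge N01 N1 \<beta> P0 P1 h0 h1 \<theta> \<nu> = stage k
     \<and> (\<forall>m\<in>{1..card N01}. \<pi> m \<in> stage k \<longleftrightarrow> \<nu> \<le> ag_index y m)"
proof -
  obtain k where k: "k \<in> {1..Suc (card N01)}" "k \<le> card N01 \<longrightarrow> \<nu> \<le> ag_index y k"
    "1 < k \<longrightarrow> ag_index y (k - 1) < \<nu>"
    using exists_threshold by blast
  have sign: "(\<pi> m \<in> stage k \<longleftrightarrow> \<nu> \<le> ag_index y m)
      \<and> (\<pi> m \<in> stage k \<longleftrightarrow> cost_gap (stage k) \<nu> (\<pi> m) \<le> 0)" if m: "m \<in> {1..card N01}" for m
  proof -
    have mem: "\<pi> m \<in> stage k \<longleftrightarrow> k \<le> m"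
      using pivot_mem_ag_set_iff[OF inj_on_pivot m] k(1) pivot_mem_N01[OF m] by auto
    show ?thesis
    proof (cases "k \<le> m")
      case True
      have "\<nu> \<le> ag_index y k" using True k m by auto
      then have "\<nu> \<le> ag_index y m" using True k(1) m ag_index_mono[of k m] by auto
      moreover have "cost_gap (stage k) \<nu> (\<pi> m) \<le> 0"
        using True k(1) \<open>\<nu> \<le> ag_index y k\<close> by (intro cost_gap_pivot_nonpos[OF m]) auto
      ultimately show ?thesis using True mem by simp
    next
      case False
      then have "ag_index y (k - 1) < \<nu>" using k m by auto
      moreover have "ag_index y m \<le> ag_index y (k - 1)" using False k(1) m by (intro ag_index_mono) auto
      moreover have "0 < cost_gap (stage k) \<nu> (\<pi> m)"
        using False k(1) \<open>ag_index y (k - 1) < \<nu>\<close> by (intro cost_gap_pivot_pos[OF m]) auto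
      ultimately show ?thesis using False mem by simp
    qed
  qed
  have "\<forall>j\<in>N01. j \<in> stage k \<longleftrightarrow> cost_gap (stage k) \<nu> j \<le> 0"
  proof
    fix j assume "j \<in> N01"
    then obtain m where "m \<in> {1..card N01}" "j = \<pi> m" using image_pivot by blast
    then show "j \<in> stage k \<longleftrightarrow> cost_gap (stage k) \<nu> j \<le> 0" using sign by blast
  qed
  then have "S_charge N01 N1 \<beta> P0 P1 h0 h1 \<theta> \<nu> = stage k"
    by (intro S_charge_eq_if_gap_sign ag_set_subset)
  then show ?thesis using k(1) sign by blast
qed

end

theorem theorem9:
  fixes N01 N1 :: "'s::finite set"
    and \<beta> :: real
    and P0 P1 :: "'s \<Rightarrow> 's \<Rightarrow> real"
    and h0 h1 \<theta> :: "'s \<Rightarrow> real"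
    and F :: "'s set set"
    and \<pi> :: "nat \<Rightarrow> 's" and y :: "nat \<Rightarrow> real" and \<nu>idx :: "'s \<Rightarrow> real"
  assumes partition: "N01 \<inter> N1 = {}" "N01 \<union> N1 = UNIV"
    and beta: "0 < \<beta>" "\<beta> < 1"
    and P0_stoch: "\<forall>i j. 0 \<le> P0 i j" "\<forall>i. (\<Sum>j\<in>UNIV. P0 i j) = 1"
    and P1_stoch: "\<forall>i j. 0 \<le> P1 i j" "\<forall>i. (\<Sum>j\<in>UNIV. P1 i j) = 1"
    and uncontrollable: "\<forall>i\<in>N1. \<forall>j. P1 i j = P0 i j"
    and theta_pos: "\<forall>j. 0 < \<theta> j"
    and F: "set_system N01 F"
    and PCL_i: "\<forall>S\<in>F. \<forall>j\<in>N01. 0 < marg_work N01 N1 \<beta> P0 P1 \<theta> S j"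
    and run: "adaptive_greedy_run N01 F (marg_work N01 N1 \<beta> P0 P1 \<theta>) (hhat0 \<beta> P0 P1 h0 h1) \<pi> y"
    and PCL_ii: "\<forall>k\<in>{1..<card N01}. ag_index y k \<le> ag_index y (Suc k)"
    and index: "\<forall>k\<in>{1..card N01}. \<nu>idx (\<pi> k) = ag_index y k"
  shows "\<forall>\<nu>::real. S_charge N01 N1 \<beta> P0 P1 h0 h1 \<theta> \<nu> = {j \<in> N01. \<nu> \<le> \<nu>idx j}
                  \<and> S_charge N01 N1 \<beta> P0 P1 h0 h1 \<theta> \<nu> \<in> F"
proof -
  interpret pcl_greedy_run N01 N1 \<beta> P0 P1 h0 h1 \<theta> F \<pi> y
    using partition beta P0_stoch P1_stoch F PCL_i run PCL_ii
    by unfold_locales (auto simp: stochastic_def)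
  show ?thesis
  proof
    fix \<nu> :: real
    obtain k where k: "k \<in> {1..Suc (card N01)}"
      and S_charge: "S_charge N01 N1 \<beta> P0 P1 h0 h1 \<theta> \<nu> = stage k"
      and mem: "\<forall>m\<in>{1..card N01}. \<pi> m \<in> stage k \<longleftrightarrow> \<nu> \<le> ag_index y m"
      using S_charge_eq_stage by blast
    have "j \<in> stage k \<longleftrightarrow> \<nu> \<le> \<nu>idx j" if "j \<in> N01" for j
    proof -
      have "j \<in> \<pi> ` {1..card N01}" using that image_pivot by simp
      then obtain m where "m \<in> {1..card N01}" "j = \<pi> m" by (rule imageE) simp
      then show ?thesis using mem index by simp
    qed
    then have "stage k = {j \<in> N01. \<nu> \<le> \<nu>idx j}" using ag_set_subset[of N01 \<pi> k] by auto
    then show "S_charge N01 N1 \<beta> P0 P1 h0 h1 \<theta> \<nu> = {j \<in> N01. \<nu> \<le> \<nu>idx j}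
        \<and> S_charge N01 N1 \<beta> P0 P1 h0 h1 \<theta> \<nu> \<in> F"
      using S_charge stage_in_F[of k] k by simp
  qed
qed

end
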